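(* Let $f(z)=\sum_{j\ge0}\binom{2j}{j}\left(\sum_{k=0}^{2j}(-1)^k\binom{2j}{k}^4\right)z^j\in1+z\mathbb{Z}[[z]]$. Then there is a finite set $\mathcal{J}$ of primes such that $f\in\mathcal{L}(\mathcal{P}\setminus\mathcal{J})$, where $\mathcal{P}$ is the set of all primes. (In the course of this, for every prime $p\neq2$ one has $\Lambda_p(f_{|p})=f_{|p}$.)
   Context: For a prime $p$, $\mathbb{Z}_{(p)}$ is the localization of $\mathbb{Z}$ at $(p)$; for $f=\sum a(n)z^n\in\mathbb{Z}_{(p)}[[z]]$, $f_{|p}(z)=\sum (a(n)\bmod p)z^n$; $\Lambda_p(\sum a(n)z^n)=\sum a(np)z^n$. The height of a rational function $P/Q$ with $P,Q$ coprime polynomials is $\max(\deg P,\deg Q)$. For an infinite set $\mathcal{S}$ of primes, $\mathcal{L}(\mathcal{S})$ is the set of $f\in 1+z\mathbb{Q}[[z]]$ such that there is a constant $C>0$ independent of $p$ with: for every $p\in\mathcal{S}$, $f\in\mathbb{Z}_{(p)}[[z]]$, and there exist an integer $l_p>0$ and $A_p\in\mathbb{F}_p(z)\cap\mathbb{F}_p[[z]]$ with $f_{|p}(z)=A_p(z)f_{|p}(z^{p^{l_p}})$ and height of $A_p$ at most $Cp^{l_p}$. *)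

theory Defs
  imports "HOL-Computational_Algebra.Computational_Algebra" "HOL-Number_Theory.Number_Theory"
begin

text \<open>Membership of a rational number in the localization Z_(p).\<close>
definition in_Zloc :: "nat \<Rightarrow> rat \<Rightarrow> bool" where
  "in_Zloc p q \<longleftrightarrow> coprime (snd (quotient_of q)) (int p)"

text \<open>For q in Z_(p) and an integer a: the residue of q mod p equals a mod p,
  i.e. q - a lies in p Z_(p).\<close>
definition red_eq :: "nat \<Rightarrow> rat \<Rightarrow> int \<Rightarrow> bool" where
  "red_eq p q a \<longleftrightarrow> in_Zloc p q \<and> in_Zloc p ((q - of_int a) / of_int (int p))"

text \<open>Power series over F_p are represented by integer power series, compared coefficientwise mod p.\<close>
definition fps_cong :: "nat \<Rightarrow> int fps \<Rightarrow> int fps \<Rightarrow> bool" where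
  "fps_cong p F G \<longleftrightarrow> (\<forall>n. [fps_nth F n = fps_nth G n] (mod int p))"

text \<open>g is a lift of the reduction f_{|p} of the rational power series f.\<close>
definition is_red_mod :: "nat \<Rightarrow> rat fps \<Rightarrow> int fps \<Rightarrow> bool" where
  "is_red_mod p f g \<longleftrightarrow> (\<forall>n. red_eq p (fps_nth f n) (fps_nth g n))"

definition fps_subst_pow :: "nat \<Rightarrow> 'a::zero fps \<Rightarrow> 'a fps" where
  "fps_subst_pow m g = Abs_fps (\<lambda>n. if m dvd n then fps_nth g (n div m) else 0)"

definition fps_Lambda :: "nat \<Rightarrow> 'a fps \<Rightarrow> 'a fps" where
  "fps_Lambda p g = Abs_fps (\<lambda>n. fps_nth g (n * p))"

text \<open>A (an element of F_p[[z]], represented by an integer power series) lies in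
  F_p(z) \<inter> F_p[[z]] and has height at most H: A = P/Q with P, Q in F_p[z], Q \<noteq> 0
  and max(deg P, deg Q) \<le> H. (The height of the reduced fraction is the minimum of
  max(deg P, deg Q) over all such representations.)\<close>
definition ratfun_height_le :: "nat \<Rightarrow> int fps \<Rightarrow> real \<Rightarrow> bool" where
  "ratfun_height_le p A H \<longleftrightarrow>
     (\<exists>P Q :: int poly. (\<exists>i. \<not> int p dvd Polynomial.coeff Q i) \<and>
        real (Polynomial.degree P) \<le> H \<and> real (Polynomial.degree Q) \<le> H \<and>
        fps_cong p (fps_of_poly Q * A) (fps_of_poly P))"

definition Lclass :: "nat set \<Rightarrow> rat fps set" where
  "Lclass S = {f. fps_nth f 0 = 1 \<and>
     (\<exists>C::real. C > 0 \<and> (\<forall>p\<in>S. (\<forall>n. in_Zloc p (fps_nth f n)) \<and>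
        (\<exists>l::nat. l > 0 \<and> (\<exists>A g. is_red_mod p f g \<and> ratfun_height_le p A (C * real p ^ l) \<and>
            fps_cong p g (A * fps_subst_pow (p ^ l) g)))))}"

definition a19 :: "nat \<Rightarrow> int" where
  "a19 j = int ((2*j) choose j) * (\<Sum>k=0..2*j. (-1)^k * int ((2*j) choose k) ^ 4)"

definition f19 :: "rat fps" where
  "f19 = Abs_fps (\<lambda>j. of_int (a19 j))"

end

theory Submission
  imports Defs
begin

(*
  Lucas' theorem, (a p + b choose c p + d) = (a choose c) (b choose d) mod p for digits b, d < p,
  makes the alternating sums of fourth powers of binomial coefficients multiplicative in the base-p
  digits for odd p, and likewise the central binomial coefficients, except that both sides vanish
  when a carry occurs. Hence a(n p + r) = a(n) a(r) mod p for r < p and every odd prime p. With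
  a(0) = 1 this gives Lambda_p(f) = f mod p, and f = A(z) f(z^p) mod p for the polynomial
  A = a(0) + ... + a(p - 1) z^(p - 1) of height below p, so f lies in L of all primes except 2.
*)

lemma binomial_prime_cong:
  assumes "prime p"
  shows "[p choose j = (if j = 0 \<or> j = p then 1 else 0)] (mod p)"
proof -
  have "p dvd p choose j" if "0 < j" "j < p"
    using dvd_choose_prime[of j p] that assms by auto
  then show ?thesis
    by (cases j p rule: linorder_cases) (auto simp: cong_0_iff binomial_eq_0)
qed

lemma binomial_add_prime_cong:
  assumes "prime p"
  shows "[(p + m) choose k = (m choose k) + (if p \<le> k then m choose (k - p) else 0)] (mod p)"
proof -
  have "p \<noteq> 0" using assms by auto
  have "(p + m) choose k = (\<Sum>j\<le>k. (p choose j) * (m choose (k - j)))"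
    by (simp add: vandermonde)
  also have "[\<dots> = (\<Sum>j\<le>k. (if j = 0 \<or> j = p then 1 else 0) * (m choose (k - j)))] (mod p)"
    by (intro cong_sum cong_mult binomial_prime_cong assms cong_refl)
  also have "(\<Sum>j\<le>k. (if j = 0 \<or> j = p then 1 else 0) * (m choose (k - j)))
      = (\<Sum>j\<le>k. (if j = 0 then m choose k else 0) + (if j = p then m choose (k - p) else 0))"
    using \<open>p \<noteq> 0\<close> by (intro sum.cong) auto
  also have "\<dots> = (m choose k) + (if p \<le> k then m choose (k - p) else 0)"
    by (simp add: sum.distrib)
  finally show ?thesis .
qed

lemma binomial_lucas_cong:
  assumes p: "prime p" and "b < p" "d < p"
  shows "[(a * p + b) choose (c * p + d) = (a choose c) * (b choose d)] (mod p)"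
  using assms(2,3)
proof (induction a arbitrary: c)
  case 0
  then show ?case
    by (cases c) (auto simp: binomial_eq_0 trans_less_add2)
next
  case (Suc a)
  have IH: "[(a * p + b) choose (c' * p + d) = (a choose c') * (b choose d)] (mod p)" for c'
    using Suc by blast
  have "[Suc a * p + b choose (c * p + d)
      = (a * p + b choose (c * p + d)) + (if p \<le> c * p + d then a * p + b choose (c * p + d - p) else 0)] (mod p)"
    using binomial_add_prime_cong[OF p, of "a * p + b" "c * p + d"] by (simp add: add.assoc)
  also have "[(a * p + b choose (c * p + d)) + (if p \<le> c * p + d then a * p + b choose (c * p + d - p) else 0)
      = (a choose c) * (b choose d) + (if 0 < c then (a choose (c - 1)) * (b choose d) else 0)] (mod p)"
  proof (cases c)
    case 0
    then show ?thesis using IH[of 0] Suc.prems by simp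
  next
    case (Suc c')
    then have "c * p + d - p = c' * p + d" by simp
    then show ?thesis using IH[of c] IH[of c'] Suc by (simp add: cong_add)
  qed
  also have "(a choose c) * (b choose d) + (if 0 < c then (a choose (c - 1)) * (b choose d) else 0)
      = (Suc a choose c) * (b choose d)"
    by (cases c) (simp_all add: algebra_simps)
  finally show ?case .
qed

definition lucas_property :: "nat \<Rightarrow> (nat \<Rightarrow> int) \<Rightarrow> bool" where
  "lucas_property p a \<longleftrightarrow> (\<forall>n r. r < p \<longrightarrow> [a (n * p + r) = a n * a r] (mod int p))"

lemma lucas_propertyI:
  "(\<And>n r. r < p \<Longrightarrow> [a (n * p + r) = a n * a r] (mod int p)) \<Longrightarrow> lucas_property p a"
  by (simp add: lucas_property_def)

lemma lucas_propertyD: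
  "lucas_property p a \<Longrightarrow> r < p \<Longrightarrow> [a (n * p + r) = a n * a r] (mod int p)"
  by (simp add: lucas_property_def)

lemma in_Zloc_of_int: "in_Zloc p (of_int m)"
  by (simp add: in_Zloc_def quotient_of_int)

lemma is_red_mod_of_int: "is_red_mod p (Abs_fps (\<lambda>n. of_int (a n))) (Abs_fps a)"
  using in_Zloc_of_int[of p 0] by (simp add: is_red_mod_def red_eq_def in_Zloc_of_int)

lemma red_eq_of_int_imp_cong:
  assumes "p > 0" and "red_eq p (of_int m) a"
  shows "[a = m] (mod int p)"
proof -
  obtain n d where q: "quotient_of ((of_int m - of_int a) / of_int (int p)) = (n, d)"
    by (cases "quotient_of ((of_int m - of_int a) / of_int (int p) :: rat)") auto
  have "coprime d (int p)"
    using assms(2) q by (simp add: red_eq_def in_Zloc_def)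
  have "(of_int m - of_int a) / of_int (int p) = (of_int n / of_int d :: rat)"
    using quotient_of_div[OF q] .
  then have "(of_int (m - a) :: rat) * of_int d = of_int n * of_int (int p)"
    using assms(1) quotient_of_denom_pos[OF q] by (simp add: field_simps)
  then have "(m - a) * d = n * int p"
    by (metis of_int_eq_iff of_int_mult)
  then have "int p dvd (m - a) * d"
    by simp
  then have "int p dvd m - a"
    using \<open>coprime d (int p)\<close> by (simp add: coprime_commute coprime_dvd_mult_left_iff)
  then have "[m = a] (mod int p)"
    by (simp add: cong_iff_dvd_diff)
  then show ?thesis
    by (rule cong_sym)
qed

lemma is_red_mod_of_int_imp_cong:
  assumes "p > 0" and "is_red_mod p (Abs_fps (\<lambda>n. of_int (a n))) g"
  shows "[fps_nth g n = a n] (mod int p)"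
  using assms red_eq_of_int_imp_cong by (auto simp: is_red_mod_def)

lemma fps_Lambda_cong_of_lucas_property:
  assumes "p > 0" and "lucas_property p a" and "a 0 = 1"
    and "is_red_mod p (Abs_fps (\<lambda>n. of_int (a n))) g"
  shows "fps_cong p (fps_Lambda p g) g"
  unfolding fps_cong_def
proof
  fix n
  have "[fps_nth (fps_Lambda p g) n = a (n * p + 0)] (mod int p)"
    using is_red_mod_of_int_imp_cong[OF assms(1,4)] by (simp add: fps_Lambda_def)
  also have "[a (n * p + 0) = a n] (mod int p)"
    using lucas_propertyD[OF assms(2,1)] assms(3) by simp
  also have "[a n = fps_nth g n] (mod int p)"
    using is_red_mod_of_int_imp_cong[OF assms(1,4)] by (rule cong_sym)
  finally show "[fps_nth (fps_Lambda p g) n = fps_nth g n] (mod int p)" .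
qed

lemma fps_of_poly_digits_times_subst_pow_nth:
  fixes a b :: "nat \<Rightarrow> 'a::comm_semiring_1"
  assumes "p > 0"
  shows "fps_nth (fps_of_poly (Poly (map a [0..<p])) * fps_subst_pow p (Abs_fps b)) n
    = a (n mod p) * b (n div p)"
proof -
  have summand: "Polynomial.coeff (Poly (map a [0..<p])) i * (if p dvd n - i then b ((n - i) div p) else 0)
      = (if i = n mod p then a (n mod p) * b (n div p) else 0)" if "i \<le> n" for i
  proof (cases "i < p")
    case True
    with that have "p dvd n - i \<longleftrightarrow> i = n mod p"
      by (metis mod_eq_dvd_iff_nat mod_less)
    moreover have "n - n mod p = n div p * p"
      by (simp add: minus_mod_eq_div_mult)
    ultimately show ?thesis
      using True assms by (auto simp: nth_default_def)
  next
    case False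
    then show ?thesis
      using assms by (auto simp: nth_default_def)
  qed
  have "fps_nth (fps_of_poly (Poly (map a [0..<p])) * fps_subst_pow p (Abs_fps b)) n
      = (\<Sum>i=0..n. Polynomial.coeff (Poly (map a [0..<p])) i * (if p dvd n - i then b ((n - i) div p) else 0))"
    by (simp add: fps_mult_nth fps_subst_pow_def cong: if_cong)
  also have "\<dots> = (\<Sum>i=0..n. if i = n mod p then a (n mod p) * b (n div p) else 0)"
    using summand by (intro sum.cong) auto
  finally show ?thesis
    by simp
qed

lemma lucas_property_fps_cong:
  assumes "p > 0" and "lucas_property p a"
  shows "fps_cong p (Abs_fps a) (fps_of_poly (Poly (map a [0..<p])) * fps_subst_pow p (Abs_fps a))"
  unfolding fps_cong_def fps_of_poly_digits_times_subst_pow_nth[OF assms(1)]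
proof
  fix n
  have "[a (n div p * p + n mod p) = a (n div p) * a (n mod p)] (mod int p)"
    using lucas_propertyD[OF assms(2), of "n mod p" "n div p"] assms(1) by simp
  then show "[fps_nth (Abs_fps a) n = a (n mod p) * a (n div p)] (mod int p)"
    by (simp add: mult.commute)
qed

lemma ratfun_height_le_fps_of_poly:
  assumes "p > 1" and "real (Polynomial.degree P) \<le> H"
  shows "ratfun_height_le p (fps_of_poly P) H"
proof -
  have "\<not> int p dvd Polynomial.coeff (1 :: int poly) 0" and "real (Polynomial.degree (1 :: int poly)) \<le> H"
    using assms by auto
  moreover have "fps_cong p (fps_of_poly 1 * fps_of_poly P) (fps_of_poly P)"
    by (simp add: fps_cong_def)
  ultimately show ?thesis
    unfolding ratfun_height_le_def using assms(2) by blast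
qed

lemma lucas_property_in_Lclass:
  assumes "a 0 = 1" and "\<And>p. p \<in> S \<Longrightarrow> prime p \<and> lucas_property p a"
  shows "Abs_fps (\<lambda>n. of_int (a n)) \<in> Lclass S"
proof -
  let ?f = "Abs_fps (\<lambda>n. of_int (a n)) :: rat fps"
  have "\<exists>l>0. \<exists>A g. is_red_mod p ?f g \<and> ratfun_height_le p A (1 * real p ^ l) \<and>
      fps_cong p g (A * fps_subst_pow (p ^ l) g)" if "p \<in> S" for p
  proof -
    have p: "prime p" and lucas: "lucas_property p a"
      using assms(2)[OF that] by auto
    define A where "A = fps_of_poly (Poly (map a [0..<p]))"
    have "ratfun_height_le p A (1 * real p ^ 1)"
      unfolding A_def using prime_gt_1_nat[OF p] degree_Poly[of "map a [0..<p]"]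
      by (intro ratfun_height_le_fps_of_poly) auto
    moreover have "fps_cong p (Abs_fps a) (A * fps_subst_pow (p ^ 1) (Abs_fps a))"
      unfolding A_def using lucas_property_fps_cong[OF prime_gt_0_nat[OF p] lucas] by simp
    ultimately show ?thesis
      using is_red_mod_of_int by blast
  qed
  then show ?thesis
    unfolding Lclass_def using assms(1) by (intro CollectI conjI exI[of _ "1::real"]) (auto simp: in_Zloc_of_int)
qed

lemma sum_lessThan_mult_split:
  fixes f :: "nat \<Rightarrow> 'a::comm_monoid_add"
  shows "(\<Sum>k<m * p. f k) = (\<Sum>i<m. \<Sum>j<p. f (i * p + j))"
proof -
  have "sum f {i * p..<i * p + p} = (\<Sum>j<p. f (i * p + j))" for i
    using sum.shift_bounds_nat_ivl[of f 0 "i * p" p] by (simp add: atLeast0LessThan add.commute)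
  then show ?thesis
    by (simp flip: sum.nat_group)
qed

definition alt_binomial_power_sum :: "nat \<Rightarrow> nat \<Rightarrow> int" where
  "alt_binomial_power_sum e m = (\<Sum>k=0..m. (-1) ^ k * int (m choose k) ^ e)"

lemma lucas_property_alt_binomial_power_sum:
  assumes p: "prime p" "odd p" and "e > 0"
  shows "lucas_property p (alt_binomial_power_sum e)"
proof (rule lucas_propertyI)
  fix M s assume s: "s < p"
  define t where "t m k = (-1::int) ^ k * int (m choose k) ^ e" for m k
  \<comment> \<open>needs e > 0: for e = 0 the summands with k > m would be 1 rather than 0\<close>
  have sum_below: "alt_binomial_power_sum e m = (\<Sum>k<N. t m k)" if "m < N" for m N
    unfolding alt_binomial_power_sum_def t_def
    by (rule sum.mono_neutral_left) (use that \<open>e > 0\<close> in \<open>auto simp: binomial_eq_0\<close>)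
  have "alt_binomial_power_sum e (M * p + s) = (\<Sum>i<Suc M. \<Sum>j<p. t (M * p + s) (i * p + j))"
    using s sum_below[of "M * p + s" "Suc M * p"] by (simp only: sum_lessThan_mult_split) simp
  also have "[\<dots> = (\<Sum>i<Suc M. \<Sum>j<p. t M i * t s j)] (mod int p)"
  proof (intro cong_sum)
    fix i j assume "j \<in> {..<p}"
    then have "[int ((M * p + s) choose (i * p + j)) = int (M choose i) * int (s choose j)] (mod int p)"
      using binomial_lucas_cong[OF p(1) s] by (simp flip: cong_int_iff)
    then have "[t (M * p + s) (i * p + j)
        = (-1) ^ (i * p + j) * (int (M choose i) * int (s choose j)) ^ e] (mod int p)"
      unfolding t_def by (intro cong_mult cong_pow cong_refl)
    moreover have "(-1::int) ^ (i * p + j) = (-1) ^ i * (-1) ^ j"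
      using p(2) by (simp add: power_add minus_one_power_iff)
    ultimately show "[t (M * p + s) (i * p + j) = t M i * t s j] (mod int p)"
      by (simp add: t_def power_mult_distrib ac_simps)
  qed
  also have "(\<Sum>i<Suc M. \<Sum>j<p. t M i * t s j) = alt_binomial_power_sum e M * alt_binomial_power_sum e s"
    using s sum_below[of M "Suc M"] sum_below[of s p] by (simp only: sum_product)
  finally show "[alt_binomial_power_sum e (M * p + s)
      = alt_binomial_power_sum e M * alt_binomial_power_sum e s] (mod int p)" .
qed

lemma central_binomial_prime_dvd:
  assumes p: "prime p" and "r < p" "p \<le> 2 * r"
  shows "p dvd (2 * (n * p + r)) choose (n * p + r)"
proof -
  have digits: "2 * (n * p + r) = Suc (2 * n) * p + (2 * r - p)" and "2 * r - p < p"
    using assms(2,3) by (simp_all add: algebra_simps)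
  have vanishing_digit: "(2 * r - p) choose r = 0"
    using assms prime_gt_0_nat[OF p] by (simp add: binomial_eq_0)
  have "[Suc (2 * n) * p + (2 * r - p) choose (n * p + r) = 0] (mod p)"
    using binomial_lucas_cong[OF p \<open>2 * r - p < p\<close> assms(2), of "Suc (2 * n)" n]
    unfolding vanishing_digit mult_0_right .
  then show ?thesis
    unfolding digits by (simp add: cong_0_iff)
qed

lemma a19_eq: "a19 j = int ((2 * j) choose j) * alt_binomial_power_sum 4 (2 * j)"
  by (simp add: a19_def alt_binomial_power_sum_def)

lemma lucas_property_a19:
  assumes p: "prime p" "odd p"
  shows "lucas_property p a19"
proof (rule lucas_propertyI)
  fix n r assume r: "r < p"
  show "[a19 (n * p + r) = a19 n * a19 r] (mod int p)"
  proof (cases "2 * r < p")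
    case True
    have digits: "2 * (n * p + r) = (2 * n) * p + 2 * r"
      by (simp add: algebra_simps)
    have "[(2 * n * p + 2 * r) choose (n * p + r) = ((2 * n) choose n) * ((2 * r) choose r)] (mod p)"
      using binomial_lucas_cong[OF p(1) True r] .
    then have "[int ((2 * (n * p + r)) choose (n * p + r))
        = int ((2 * n) choose n) * int ((2 * r) choose r)] (mod int p)"
      unfolding digits by (simp flip: cong_int_iff)
    moreover have "lucas_property p (alt_binomial_power_sum 4)"
      by (rule lucas_property_alt_binomial_power_sum[OF p]) simp
    then have "[alt_binomial_power_sum 4 (2 * (n * p + r))
        = alt_binomial_power_sum 4 (2 * n) * alt_binomial_power_sum 4 (2 * r)] (mod int p)"
      unfolding digits using True by (rule lucas_propertyD)
    ultimately have "[a19 (n * p + r) = (int ((2 * n) choose n) * int ((2 * r) choose r))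
        * (alt_binomial_power_sum 4 (2 * n) * alt_binomial_power_sum 4 (2 * r))] (mod int p)"
      unfolding a19_eq by (rule cong_mult)
    then show ?thesis
      by (simp add: a19_eq ac_simps)
  next
    case False
    then have "int p dvd a19 (n * p + r)" and "int p dvd a19 r"
      using central_binomial_prime_dvd[OF p(1) r, of n] central_binomial_prime_dvd[OF p(1) r, of 0]
      by (simp_all add: a19_eq flip: int_dvd_int_iff)
    then show ?thesis
      by (simp add: cong_iff_dvd_diff dvd_diff)
  qed
qed

theorem mainTheorem19:
  shows "(\<exists>J::nat set. finite J \<and> (\<forall>p\<in>J. prime p) \<and> f19 \<in> Lclass ({p. prime p} - J)) \<and>
         (\<forall>p::nat. prime p \<longrightarrow> p \<noteq> 2 \<longrightarrow>
            (\<forall>g. is_red_mod p f19 g \<longrightarrow> fps_cong p (fps_Lambda p g) g))"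
proof -
  have lucas: "lucas_property p a19" if "prime p" "p \<noteq> 2" for p
    using that prime_ge_2_nat[of p] prime_odd_nat[of p] lucas_property_a19 by fastforce
  have "a19 0 = 1"
    by (simp add: a19_def)
  have "f19 \<in> Lclass ({p. prime p} - {2})"
    unfolding f19_def using lucas by (intro lucas_property_in_Lclass \<open>a19 0 = 1\<close>) blast
  moreover have "fps_cong p (fps_Lambda p g) g"
    if "prime p" "p \<noteq> 2" "is_red_mod p f19 g" for p g
    using fps_Lambda_cong_of_lucas_property[OF prime_gt_0_nat lucas \<open>a19 0 = 1\<close>] that
    unfolding f19_def by blast
  ultimately show ?thesis
    by (intro conjI exI[of _ "{2}"]) auto
qed

end
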